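(* For all $n,m,N\in\mathbb{Z}$ the automorphisms $s_0,s_1,s_2,\pi,w_0,w_1,r$ act on the $\tau$ functions $\tau^{n,m}_N$ as follows: \[ s_0(\tau^{n,m}_{N})=\tau^{-n,m-n}_{N},\quad s_1(\tau^{n,m}_{N})=\tau^{m-1,n+1}_{N},\quad s_2(\tau^{n,m}_{N})=\tau^{n-m,-m}_{N},\quad \pi(\tau^{n,m}_{N})=\tau^{-m,n-m+1}_{N}, \] \[ w_0(\tau^{n,m}_{N})=\tau^{n,m}_{-N},\quad w_1(\tau^{n,m}_{N})=\tau^{n,m}_{2-N},\quad r(\tau^{n,m}_{N})=\tau^{n,m}_{1-N}. \]
   Context: Let $Q\in\mathbb{C}^\times$ be generic and let $\alpha_0,\alpha_1,\gamma$ be indeterminates; put $\alpha_2:=Q\alpha_0^{-1}\alpha_1^{-1}$, so $\alpha_0\alpha_1\alpha_2=Q$ (these are sixth roots of the usual parameters: $q=Q^6$, $a_i=\alpha_i^6$, $c=\gamma^6$). Let $\tau_i,\bar\tau_i$ ($i\in\mathbb{Z}/3\mathbb{Z}$) be six further indeterminates and $K=\mathbb{C}(\alpha_0,\alpha_1,\gamma,\tau_0,\tau_1,\tau_2,\bar\tau_0,\bar\tau_1,\bar\tau_2)$. Indices are taken mod 3. Define field automorphisms $s_0,s_1,s_2,\pi,w_0,w_1,r$ of $K$ (fixing $\mathbb{C}$) as follows. On parameters: $s_i(\alpha_i)=\alpha_i^{-1}$, $s_i(\alpha_j)=\alpha_j\alpha_i$ ($j\neq i$), $\pi(\alpha_j)=\alpha_{j+1}$,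 $s_i(\gamma)=\pi(\gamma)=\gamma$; $w_0,w_1,r$ fix every $\alpha_j$, and $w_0(\gamma)=\gamma^{-1}$, $w_1(\gamma)=Q^{-2}\gamma^{-1}$, $r(\gamma)=Q^{-1}\gamma^{-1}$. With $u_i=Q^{-2}\gamma^{-4}\alpha_i^6$ and $v_i=Q^{2}\gamma^{4}\alpha_i^6$: $s_i(\tau_i)=\dfrac{u_i\tau_{i+1}\bar\tau_{i-1}+\bar\tau_{i+1}\tau_{i-1}}{Q^{-1}\gamma^{-2}\alpha_i^{3}\,\bar\tau_i}$, $s_i(\bar\tau_i)=\dfrac{v_i\bar\tau_{i+1}\tau_{i-1}+\tau_{i+1}\bar\tau_{i-1}}{Q\gamma^{2}\alpha_i^{3}\,\tau_i}$, and $s_i$ fixes $\tau_j,\bar\tau_j$ for $j\ne i$; $\pi(\tau_i)=\tau_{i+1}$, $\pi(\bar\tau_i)=\bar\tau_{i+1}$; $w_0(\tau_i)=\tau_i$, $w_0(\bar\tau_i)=\dfrac{\alpha_{i+1}^2(\bar\tau_i\tau_{i+1}\tau_{i+2}+u_{i-1}\tau_i\bar\tau_{i+1}\tau_{i+2}+u_{i+1}^{-1}\tau_i\tau_{i+1}\bar\tau_{i+2})}{\alpha_{i+2}^2\,\bar\tau_{i+1}\bar\tau_{i+2}}$; $w_1(\bar\tau_i)=\bar\tau_i$, $w_1(\tau_i)=\dfrac{\alpha_{i+1}^2(\tau_i\bar\tau_{i+1}\bar\tau_{i+2}+v_{i-1}\bar\tau_i\tau_{i+1}\bar\tau_{i+2}+v_{i+1}^{-1}\bar\tau_i\bar\tau_{i+1}\tau_{i+2})}{\alpha_{i+2}^2\,\tau_{i+1}\tau_{i+2}}$;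 $r(\tau_i)=\bar\tau_i$, $r(\bar\tau_i)=\tau_i$. A product of generators denotes composition of automorphisms ($xy=x\circ y$). These generate a realization of the extended affine Weyl group of type $(A_2+A_1)^{(1)}$. Set $T_1=\pi s_2s_1$, $T_2=s_1\pi s_2$, $T_4=rw_0$ (these commute), and define $\tau^{n,m}_N=T_1^{\,n}T_2^{\,m}T_4^{\,N}(\tau_1)$ for $n,m,N\in\mathbb{Z}$. *)

theory Defs
  imports "HOL-Analysis.Analysis"
begin

text \<open>Model of the field K = C(Q, alpha0, alpha1, gamma, tau_i, taubar_i).
  The generic parameter Q is treated as one more indeterminate.  An element of K is
  represented by a function on points (assignments of complex values to the
  indeterminates); two elements are equal in K iff the representing functions agree
  on a nonempty open set of points.  A field automorphism fixing C and sending each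
  generator x to a rational expression e_x acts by pullback along the point map
  p |-> (x |-> e_x(p)).  Indices of tau, taubar, alpha are read mod 3.\<close>

datatype var = Qv | Al0 | Al1 | Ga | Tau int | Taub int

type_synonym point = "var \<Rightarrow> complex"
type_synonym kelt = "point \<Rightarrow> complex"
type_synonym aut = "kelt \<Rightarrow> kelt"

definition Qp :: "point \<Rightarrow> complex" where "Qp p = p Qv"
definition gam :: "point \<Rightarrow> complex" where "gam p = p Ga"

definition alph :: "point \<Rightarrow> int \<Rightarrow> complex" where
  "alph p i = (if i mod 3 = 0 then p Al0 else if i mod 3 = 1 then p Al1
               else Qp p / (p Al0 * p Al1))"

definition tau :: "point \<Rightarrow> int \<Rightarrow> complex" where "tau p i = p (Tau (i mod 3))"
definition taub :: "point \<Rightarrow> int \<Rightarrow> complex" where "taub p i = p (Taub (i mod 3))"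

definition uu :: "point \<Rightarrow> int \<Rightarrow> complex" where
  "uu p i = alph p i ^ 6 / (Qp p ^ 2 * gam p ^ 4)"
definition vv :: "point \<Rightarrow> int \<Rightarrow> complex" where
  "vv p i = Qp p ^ 2 * gam p ^ 4 * alph p i ^ 6"

definition sig_s :: "int \<Rightarrow> point \<Rightarrow> point" where
  "sig_s i p = (\<lambda>x. case x of
      Qv \<Rightarrow> Qp p
    | Al0 \<Rightarrow> (if i mod 3 = 0 then 1 / alph p 0 else alph p 0 * alph p i)
    | Al1 \<Rightarrow> (if i mod 3 = 1 then 1 / alph p 1 else alph p 1 * alph p i)
    | Ga \<Rightarrow> gam p
    | Tau j \<Rightarrow> (if j mod 3 = i mod 3 then
          (uu p i * tau p (i+1) * taub p (i-1) + taub p (i+1) * tau p (i-1))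
          / (alph p i ^ 3 * taub p i / (Qp p * gam p ^ 2))
        else tau p j)
    | Taub j \<Rightarrow> (if j mod 3 = i mod 3 then
          (vv p i * taub p (i+1) * tau p (i-1) + tau p (i+1) * taub p (i-1))
          / (Qp p * gam p ^ 2 * alph p i ^ 3 * tau p i)
        else taub p j))"

definition sig_pi :: "point \<Rightarrow> point" where
  "sig_pi p = (\<lambda>x. case x of
      Qv \<Rightarrow> Qp p | Al0 \<Rightarrow> alph p 1 | Al1 \<Rightarrow> alph p 2 | Ga \<Rightarrow> gam p
    | Tau j \<Rightarrow> tau p (j+1) | Taub j \<Rightarrow> taub p (j+1))"

definition sig_w0 :: "point \<Rightarrow> point" where
  "sig_w0 p = (\<lambda>x. case x of
      Qv \<Rightarrow> Qp p | Al0 \<Rightarrow> alph p 0 | Al1 \<Rightarrow> alph p 1 | Ga \<Rightarrow> 1 / gam p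
    | Tau j \<Rightarrow> tau p j
    | Taub i \<Rightarrow> alph p (i+1) ^ 2 *
        (taub p i * tau p (i+1) * tau p (i+2) + uu p (i-1) * tau p i * taub p (i+1) * tau p (i+2)
         + (1 / uu p (i+1)) * tau p i * tau p (i+1) * taub p (i+2))
        / (alph p (i+2) ^ 2 * taub p (i+1) * taub p (i+2)))"

definition sig_w1 :: "point \<Rightarrow> point" where
  "sig_w1 p = (\<lambda>x. case x of
      Qv \<Rightarrow> Qp p | Al0 \<Rightarrow> alph p 0 | Al1 \<Rightarrow> alph p 1 | Ga \<Rightarrow> 1 / (Qp p ^ 2 * gam p)
    | Taub j \<Rightarrow> taub p j
    | Tau i \<Rightarrow> alph p (i+1) ^ 2 *
        (tau p i * taub p (i+1) * taub p (i+2) + vv p (i-1) * taub p i * tau p (i+1) * taub p (i+2)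
         + (1 / vv p (i+1)) * taub p i * taub p (i+1) * tau p (i+2))
        / (alph p (i+2) ^ 2 * tau p (i+1) * tau p (i+2)))"

definition sig_r :: "point \<Rightarrow> point" where
  "sig_r p = (\<lambda>x. case x of
      Qv \<Rightarrow> Qp p | Al0 \<Rightarrow> alph p 0 | Al1 \<Rightarrow> alph p 1 | Ga \<Rightarrow> 1 / (Qp p * gam p)
    | Tau j \<Rightarrow> taub p j | Taub j \<Rightarrow> tau p j)"

definition pull :: "(point \<Rightarrow> point) \<Rightarrow> aut" where "pull \<sigma> f = f \<circ> \<sigma>"

definition s :: "int \<Rightarrow> aut" where "s i = pull (sig_s i)"
definition pi_a :: aut where "pi_a = pull sig_pi"
definition w0 :: aut where "w0 = pull sig_w0"
definition w1 :: aut where "w1 = pull sig_w1"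
definition r :: aut where "r = pull sig_r"

text \<open>Translations; products of generators are compositions.  The inverses are the
  reversed words (s_i, w_0, r are involutions and pi has order 3).\<close>

definition T1 :: aut where "T1 = pi_a \<circ> s 2 \<circ> s 1"
definition T1inv :: aut where "T1inv = s 1 \<circ> s 2 \<circ> pi_a \<circ> pi_a"
definition T2 :: aut where "T2 = s 1 \<circ> pi_a \<circ> s 2"
definition T2inv :: aut where "T2inv = s 2 \<circ> pi_a \<circ> pi_a \<circ> s 1"
definition T4 :: aut where "T4 = r \<circ> w0"
definition T4inv :: aut where "T4inv = w0 \<circ> r"

definition ipow :: "aut \<Rightarrow> aut \<Rightarrow> int \<Rightarrow> aut" where
  "ipow T Tinv k = (if 0 \<le> k then T ^^ nat k else Tinv ^^ nat (- k))"

definition tauf :: "int \<Rightarrow> int \<Rightarrow> int \<Rightarrow> kelt" where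
  "tauf n m N = ipow T1 T1inv n (ipow T2 T2inv m (ipow T4 T4inv N (\<lambda>p. tau p 1)))"

definition keq :: "kelt \<Rightarrow> kelt \<Rightarrow> bool" where
  "keq f g \<longleftrightarrow> (\<exists>U. open U \<and> U \<noteq> {} \<and> (\<forall>p\<in>U. f p = g p))"

end

theory Submission
  imports Defs
begin

text \<open>
  Each generator acts on \<open>K\<close> by pulling back along a rational map of points.  The defining
  relations of the extended affine Weyl group (\<open>s\<^sub>i\<^sup>2 = 1\<close>, \<open>\<pi> s\<^sub>i = s\<^sub>i\<^sub>+\<^sub>1 \<pi>\<close>,
  \<open>\<pi>\<^sup>3 = 1\<close>, the braid relation, \<open>r\<^sup>2 = w\<^sub>0\<^sup>2 = 1\<close>, \<open>r\<close> and \<open>w\<^sub>0\<close> commuting with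
  \<open>s\<^sub>i\<close> and \<open>\<pi>\<close>, \<open>w\<^sub>1 = r w\<^sub>0 r\<close>) are identities of rational maps wherever all
  intermediate coordinates are nonzero.  All maps preserve the positive real points and are
  continuous near them, so the relations hold on open neighbourhoods of that locus, and equality
  near it is a congruence on words in the generators.

  In the resulting group \<open>T\<^sub>1, T\<^sub>2, T\<^sub>4\<close> commute, so integer words in them form a lattice
  \<open>\<int>\<^sup>3\<close>, and every generator \<open>g\<close> conjugates this lattice by an integral linear map.
  Since moreover \<open>g(\<tau>\<^sub>1)\<close> is a translate of \<open>\<tau>\<^sub>1\<close>, the action of \<open>g\<close> on
  \<open>\<tau>\<^sup>n\<^sup>,\<^sup>m\<^sub>N\<close> is an affine map of the exponents, which is read off from the images
  of \<open>T\<^sub>1, T\<^sub>2, T\<^sub>4\<close> and of \<open>\<tau>\<^sub>1\<close>.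
\<close>


definition coord_vars :: "var set" where
  "coord_vars = {Qv, Al0, Al1, Ga, Tau 0, Tau 1, Tau 2, Taub 0, Taub 1, Taub 2}"

definition nonzero_pts :: "point set" where
  "nonzero_pts = {p. \<forall>v\<in>coord_vars. p v \<noteq> 0}"

definition same_coords :: "point \<Rightarrow> point \<Rightarrow> bool" where
  "same_coords p q \<longleftrightarrow> (\<forall>v\<in>coord_vars. p v = q v)"

lemma mod3_cases: obtains "(i::int) mod 3 = 0" | "i mod 3 = 1" | "i mod 3 = 2"
  by linarith

lemma tau_mod3 [simp]: "tau p (i mod 3) = tau p i"
  and taub_mod3 [simp]: "taub p (i mod 3) = taub p i"
  and alph_mod3 [simp]: "alph p (i mod 3) = alph p i"
  by (simp_all add: tau_def taub_def alph_def)

lemma small_index_simps [simp]: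
  "tau p 3 = tau p 0" "tau p 4 = tau p 1" "tau p (-1) = tau p 2" "tau p (-2) = tau p 1"
  "taub p 3 = taub p 0" "taub p 4 = taub p 1" "taub p (-1) = taub p 2" "taub p (-2) = taub p 1"
  "alph p 3 = alph p 0" "alph p 4 = alph p 1" "alph p (-1) = alph p 2" "alph p (-2) = alph p 1"
  by (simp_all add: tau_def taub_def alph_def)

lemma index_mod3_add [simp]:
  "tau p (i mod 3 + k) = tau p (i + k)" "taub p (i mod 3 + k) = taub p (i + k)"
  "alph p (i mod 3 + k) = alph p (i + k)" "alph p (i mod 3 - k) = alph p (i - k)"
  "uu p (i mod 3 + k) = uu p (i + k)" "uu p (i mod 3 - k) = uu p (i - k)"
  "vv p (i mod 3 + k) = vv p (i + k)" "vv p (i mod 3 - k) = vv p (i - k)"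
  by (simp_all add: tau_def taub_def alph_def uu_def vv_def mod_add_left_eq mod_diff_left_eq)

lemma nonzero_ptsD:
  assumes "p \<in> nonzero_pts"
  shows "tau p i \<noteq> 0" "taub p i \<noteq> 0" "alph p i \<noteq> 0" "Qp p \<noteq> 0" "gam p \<noteq> 0"
  using assms by (cases i rule: mod3_cases;
      auto simp: nonzero_pts_def coord_vars_def tau_def taub_def alph_def Qp_def gam_def)+

lemma alph2: "alph p 2 = Qp p / (alph p 0 * alph p 1)"
  by (simp add: alph_def)

lemma same_coordsI:
  assumes "Qp p = Qp q" "gam p = gam q" "alph p 0 = alph q 0" "alph p 1 = alph q 1"
    "tau p 0 = tau q 0" "tau p 1 = tau q 1" "tau p 2 = tau q 2"
    "taub p 0 = taub q 0" "taub p 1 = taub q 1" "taub p 2 = taub q 2"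
  shows "same_coords p q"
  using assms by (simp add: same_coords_def coord_vars_def Qp_def gam_def alph_def tau_def taub_def)

lemma same_coords_refl: "same_coords p p"
  by (simp add: same_coords_def)

lemma same_coordsD:
  assumes "same_coords p q"
  shows "tau p k = tau q k" "taub p k = taub q k" "alph p k = alph q k" "Qp p = Qp q"
    "gam p = gam q" "uu p k = uu q k" "vv p k = vv q k"
proof -
  have coords: "p v = q v" if "v \<in> coord_vars" for v
    using assms that by (simp add: same_coords_def)
  have params: "Qp p = Qp q" "gam p = gam q"
    by (simp_all add: coords Qp_def gam_def coord_vars_def)
  have "tau p k = tau q k \<and> taub p k = taub q k \<and> alph p k = alph q k" for k
    using params
    by (cases k rule: mod3_cases) (simp_all add: coords tau_def taub_def alph_def Qp_def coord_vars_def)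
  with params show "tau p k = tau q k" "taub p k = taub q k" "alph p k = alph q k" "Qp p = Qp q"
    "gam p = gam q" "uu p k = uu q k" "vv p k = vv q k"
    by (simp_all add: uu_def vv_def)
qed

lemma Qp_sig_s [simp]: "Qp (sig_s i p) = Qp p"
  and gam_sig_s [simp]: "gam (sig_s i p) = gam p"
  by (simp_all add: sig_s_def Qp_def gam_def)

lemma alph_sig_s:
  assumes "p \<in> nonzero_pts"
  shows "alph (sig_s i p) j = (if j mod 3 = i mod 3 then 1 / alph p i else alph p j * alph p i)"
  using nonzero_ptsD[OF assms]
  by (cases i rule: mod3_cases; cases j rule: mod3_cases)
     (auto simp: alph_def sig_s_def Qp_def field_simps)

lemma tau_sig_s:
  "tau (sig_s i p) j = (if j mod 3 = i mod 3 then
     (uu p i * tau p (i+1) * taub p (i-1) + taub p (i+1) * tau p (i-1))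
       / (alph p i ^ 3 * taub p i / (Qp p * gam p ^ 2))
   else tau p j)"
  by (simp add: sig_s_def tau_def taub_def)

lemma taub_sig_s:
  "taub (sig_s i p) j = (if j mod 3 = i mod 3 then
     (vv p i * taub p (i+1) * tau p (i-1) + tau p (i+1) * taub p (i-1))
       / (Qp p * gam p ^ 2 * alph p i ^ 3 * tau p i)
   else taub p j)"
  by (simp add: sig_s_def tau_def taub_def)

lemma Qp_sig_pi [simp]: "Qp (sig_pi p) = Qp p"
  and gam_sig_pi [simp]: "gam (sig_pi p) = gam p"
  and tau_sig_pi [simp]: "tau (sig_pi p) j = tau p (j+1)"
  and taub_sig_pi [simp]: "taub (sig_pi p) j = taub p (j+1)"
  by (simp_all add: sig_pi_def Qp_def gam_def tau_def taub_def mod_add_left_eq)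

lemma alph_sig_pi:
  assumes "p \<in> nonzero_pts"
  shows "alph (sig_pi p) j = alph p (j+1)"
proof -
  have "alph p (j+1) = alph p (j mod 3 + 1)" by simp
  moreover have "p Al0 \<noteq> 0" "p Al1 \<noteq> 0" "p Qv \<noteq> 0"
    using assms by (auto simp: nonzero_pts_def coord_vars_def)
  ultimately show ?thesis
    by (cases j rule: mod3_cases) (auto simp: alph_def sig_pi_def Qp_def field_simps)
qed

lemma Qp_sig_w0 [simp]: "Qp (sig_w0 p) = Qp p"
  and gam_sig_w0 [simp]: "gam (sig_w0 p) = 1 / gam p"
  and alph_sig_w0 [simp]: "alph (sig_w0 p) j = alph p j"
  and tau_sig_w0 [simp]: "tau (sig_w0 p) j = tau p j"
  by (simp_all add: sig_w0_def Qp_def gam_def alph_def tau_def)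

lemma taub_sig_w0:
  "taub (sig_w0 p) i = alph p (i+1) ^ 2 *
     (taub p i * tau p (i+1) * tau p (i+2) + uu p (i-1) * tau p i * taub p (i+1) * tau p (i+2)
      + (1 / uu p (i+1)) * tau p i * tau p (i+1) * taub p (i+2))
     / (alph p (i+2) ^ 2 * taub p (i+1) * taub p (i+2))"
  unfolding taub_def [of "sig_w0 p"] by (simp add: sig_w0_def)

lemma Qp_sig_w1 [simp]: "Qp (sig_w1 p) = Qp p"
  and gam_sig_w1 [simp]: "gam (sig_w1 p) = 1 / (Qp p ^ 2 * gam p)"
  and alph_sig_w1 [simp]: "alph (sig_w1 p) j = alph p j"
  and taub_sig_w1 [simp]: "taub (sig_w1 p) j = taub p j"
  by (simp_all add: sig_w1_def Qp_def gam_def alph_def taub_def)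

lemma tau_sig_w1:
  "tau (sig_w1 p) i = alph p (i+1) ^ 2 *
     (tau p i * taub p (i+1) * taub p (i+2) + vv p (i-1) * taub p i * tau p (i+1) * taub p (i+2)
      + (1 / vv p (i+1)) * taub p i * taub p (i+1) * tau p (i+2))
     / (alph p (i+2) ^ 2 * tau p (i+1) * tau p (i+2))"
  unfolding tau_def [of "sig_w1 p"] by (simp add: sig_w1_def)

lemma Qp_sig_r [simp]: "Qp (sig_r p) = Qp p"
  and gam_sig_r [simp]: "gam (sig_r p) = 1 / (Qp p * gam p)"
  and alph_sig_r [simp]: "alph (sig_r p) j = alph p j"
  and tau_sig_r [simp]: "tau (sig_r p) j = taub p j"
  and taub_sig_r [simp]: "taub (sig_r p) j = tau p j"
  by (simp_all add: sig_r_def Qp_def gam_def alph_def tau_def taub_def)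

lemmas coord_simps = alph_sig_s tau_sig_s taub_sig_s alph_sig_pi taub_sig_w0 tau_sig_w1 uu_def vv_def

section \<open>The defining relations at a point\<close>

text \<open>Each relation is checked by clearing denominators one layer at a time, from the
  outermost point inwards: while an intermediate point is still an opaque variable its nonzero
  coordinates are available to \<open>field_simps\<close>.\<close>

lemma sig_s_involution:
  assumes "i \<in> {0,1,2}" "p \<in> nonzero_pts" "q \<in> nonzero_pts" "q = sig_s i p"
  shows "same_coords (sig_s i q) p"
  by (insert assms(1), elim insertE emptyE; rule same_coordsI;
      (simp add: coord_simps assms(3) nonzero_ptsD[OF assms(3)] field_simps)?;
      (simp add: assms(4) coord_simps assms(2) nonzero_ptsD[OF assms(2)] field_simps)?;
      (thin_tac "i = _", algebra)?)

lemma sig_pi_sig_s: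
  assumes "i \<in> {0,1,2}" "p \<in> nonzero_pts" "q \<in> nonzero_pts" "q' \<in> nonzero_pts"
    "q = sig_pi p" "q' = sig_s ((i+1) mod 3) p"
  shows "same_coords (sig_s i q) (sig_pi q')"
  by (insert assms(1), elim insertE emptyE; rule same_coordsI;
      (simp add: coord_simps assms(3,4) nonzero_ptsD[OF assms(3)] nonzero_ptsD[OF assms(4)] field_simps)?;
      (simp add: assms(5,6) coord_simps assms(2) nonzero_ptsD[OF assms(2)] field_simps)?;
      (thin_tac "i = _", algebra)?)

lemma sig_pi_cube:
  assumes "p \<in> nonzero_pts" "q \<in> nonzero_pts" "q' \<in> nonzero_pts" "q = sig_pi p" "q' = sig_pi q"
  shows "same_coords (sig_pi q') p"
  by (rule same_coordsI;
      (simp add: coord_simps assms(3) nonzero_ptsD[OF assms(3)] field_simps)?;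
      (simp add: assms(5) coord_simps assms(2) nonzero_ptsD[OF assms(2)] field_simps)?;
      (simp add: assms(4) coord_simps assms(1) nonzero_ptsD[OF assms(1)] field_simps alph2)?;
      algebra?)

lemma sig_s_braid:
  assumes "p \<in> nonzero_pts" "q1 \<in> nonzero_pts" "q2 \<in> nonzero_pts" "q1' \<in> nonzero_pts"
    "q2' \<in> nonzero_pts" "q1 = sig_s 0 p" "q2 = sig_s 1 q1" "q1' = sig_s 1 p" "q2' = sig_s 0 q1'"
  shows "same_coords (sig_s 0 q2) (sig_s 1 q2')"
  by (rule same_coordsI;
      (simp add: coord_simps assms(3,5) nonzero_ptsD[OF assms(3)] nonzero_ptsD[OF assms(5)] field_simps)?;
      (simp add: assms(7,9) coord_simps assms(2,4) nonzero_ptsD[OF assms(2)] nonzero_ptsD[OF assms(4)]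
        field_simps)?;
      (simp add: assms(6,8) coord_simps assms(1) nonzero_ptsD[OF assms(1)] field_simps)?;
      algebra?)

lemma sig_w0_involution:
  assumes "p \<in> nonzero_pts" "q \<in> nonzero_pts" "q = sig_w0 p"
  shows "same_coords (sig_w0 q) p"
  by (rule same_coordsI;
      (simp add: coord_simps assms(2) nonzero_ptsD[OF assms(2)] field_simps)?;
      (simp add: assms(3) coord_simps assms(1) nonzero_ptsD[OF assms(1)] field_simps alph2)?;
      algebra?)

lemma sig_r_involution:
  assumes "p \<in> nonzero_pts"
  shows "same_coords (sig_r (sig_r p)) p"
  by (rule same_coordsI; simp add: nonzero_ptsD[OF assms] field_simps)

lemma sig_r_sig_s:
  assumes "i \<in> {0,1,2}" "p \<in> nonzero_pts" "q \<in> nonzero_pts" "q' \<in> nonzero_pts"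
    "q = sig_r p" "q' = sig_s i p"
  shows "same_coords (sig_s i q) (sig_r q')"
  by (insert assms(1), elim insertE emptyE; rule same_coordsI;
      (simp add: coord_simps assms(3,4) nonzero_ptsD[OF assms(3)] nonzero_ptsD[OF assms(4)] field_simps)?;
      (simp add: assms(5,6) coord_simps assms(2) nonzero_ptsD[OF assms(2)] field_simps alph2)?;
      (thin_tac "i = _", algebra)?)

lemma sig_w0_sig_s:
  assumes "i \<in> {0,1,2}" "p \<in> nonzero_pts" "q \<in> nonzero_pts" "q' \<in> nonzero_pts"
    "q = sig_w0 p" "q' = sig_s i p"
  shows "same_coords (sig_s i q) (sig_w0 q')"
  by (insert assms(1), elim insertE emptyE; rule same_coordsI;
      (simp add: coord_simps assms(3,4) nonzero_ptsD[OF assms(3)] nonzero_ptsD[OF assms(4)] field_simps)?;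
      (simp add: assms(5,6) coord_simps assms(2) nonzero_ptsD[OF assms(2)] field_simps alph2)?;
      (thin_tac "i = _", algebra)?)

lemma sig_r_sig_pi:
  assumes "p \<in> nonzero_pts" "q \<in> nonzero_pts" "q = sig_r p"
  shows "same_coords (sig_pi q) (sig_r (sig_pi p))"
  by (rule same_coordsI; (simp add: coord_simps assms(2))?; simp add: coord_simps assms(1,3))

lemma sig_w0_sig_pi:
  assumes "p \<in> nonzero_pts" "q \<in> nonzero_pts" "q' \<in> nonzero_pts" "q = sig_w0 p" "q' = sig_pi p"
  shows "same_coords (sig_pi q) (sig_w0 q')"
  by (rule same_coordsI;
      (simp add: coord_simps assms(2,3) nonzero_ptsD[OF assms(2)] nonzero_ptsD[OF assms(3)] field_simps)?;
      (simp add: assms(4,5) coord_simps assms(1) nonzero_ptsD[OF assms(1)] field_simps alph2)?;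
      algebra?)

lemma sig_w1_via_r_w0:
  assumes "p \<in> nonzero_pts" "q \<in> nonzero_pts" "q' \<in> nonzero_pts" "q = sig_r p" "q' = sig_w0 q"
  shows "same_coords (sig_w1 p) (sig_r q')"
  by (rule same_coordsI;
      (simp add: coord_simps assms(3) nonzero_ptsD[OF assms(3)] field_simps)?;
      (simp add: assms(5) coord_simps assms(2) nonzero_ptsD[OF assms(2)] field_simps)?;
      (simp add: assms(4) coord_simps assms(1) nonzero_ptsD[OF assms(1)] field_simps alph2)?;
      algebra?)

section \<open>Continuity and the positive points\<close>

lemma open_nonzero_pts: "open nonzero_pts"
proof -
  have "nonzero_pts = (\<Inter>v\<in>coord_vars. {p. p v \<noteq> 0})"
    by (auto simp: nonzero_pts_def)
  also have "open \<dots>"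
    by (intro open_INT ballI open_Collect_neq continuous_on_product_coordinates continuous_intros)
       (simp add: coord_vars_def)
  finally show ?thesis .
qed

lemma continuous_on_coord [continuous_intros]:
  "continuous_on S (\<lambda>p. tau p k)" "continuous_on S (\<lambda>p. taub p k)"
  "continuous_on S (\<lambda>p. Qp p)" "continuous_on S (\<lambda>p. gam p)"
  by (simp_all add: tau_def taub_def Qp_def gam_def
      continuous_on_subset[OF continuous_on_product_coordinates])

lemma continuous_on_alph [continuous_intros]: "continuous_on nonzero_pts (\<lambda>p. alph p k)"
proof -
  have "continuous_on nonzero_pts (\<lambda>p. p v)" for v
    by (rule continuous_on_subset[OF continuous_on_product_coordinates]) simp
  moreover have "p Al0 * p Al1 \<noteq> 0" if "p \<in> nonzero_pts" for p
    using that by (simp add: nonzero_pts_def coord_vars_def)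
  ultimately show ?thesis
    unfolding alph_def Qp_def by (cases k rule: mod3_cases) (auto intro!: continuous_intros)
qed

lemma continuous_on_uu_vv [continuous_intros]:
  "continuous_on nonzero_pts (\<lambda>p. uu p k)" "continuous_on nonzero_pts (\<lambda>p. vv p k)"
  unfolding uu_def vv_def by (auto intro!: continuous_intros simp: nonzero_ptsD)

lemma uu_vv_nonzero: "p \<in> nonzero_pts \<Longrightarrow> uu p k \<noteq> 0" "p \<in> nonzero_pts \<Longrightarrow> vv p k \<noteq> 0"
  by (simp_all add: uu_def vv_def nonzero_ptsD)

lemma continuous_on_sig_s: "continuous_on nonzero_pts (sig_s i)"
proof (rule continuous_on_coordinatewise_then_product)
  fix v
  show "continuous_on nonzero_pts (\<lambda>p. sig_s i p v)"
  proof (cases v)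
    case Al0 then show ?thesis
      by (cases "i mod 3 = 0") (auto simp: sig_s_def nonzero_ptsD intro!: continuous_intros)
  next
    case Al1 then show ?thesis
      by (cases "i mod 3 = 1") (auto simp: sig_s_def nonzero_ptsD intro!: continuous_intros)
  next
    case (Tau j) then show ?thesis
      by (cases "j mod 3 = i mod 3") (auto simp: sig_s_def nonzero_ptsD intro!: continuous_intros)
  next
    case (Taub j) then show ?thesis
      by (cases "j mod 3 = i mod 3") (auto simp: sig_s_def nonzero_ptsD intro!: continuous_intros)
  qed (auto simp: sig_s_def intro!: continuous_intros)
qed

lemma continuous_on_sig_pi: "continuous_on nonzero_pts sig_pi"
  by (rule continuous_on_coordinatewise_then_product, case_tac i)
     (auto simp: sig_pi_def intro!: continuous_intros)

lemma continuous_on_sig_w0: "continuous_on nonzero_pts sig_w0"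
  by (rule continuous_on_coordinatewise_then_product, case_tac i)
     (auto simp: sig_w0_def nonzero_ptsD uu_vv_nonzero intro!: continuous_intros)

lemma continuous_on_sig_w1: "continuous_on nonzero_pts sig_w1"
  by (rule continuous_on_coordinatewise_then_product, case_tac i)
     (auto simp: sig_w1_def nonzero_ptsD uu_vv_nonzero intro!: continuous_intros)

lemma continuous_on_sig_r: "continuous_on nonzero_pts sig_r"
  by (rule continuous_on_coordinatewise_then_product, case_tac i)
     (auto simp: sig_r_def nonzero_ptsD intro!: continuous_intros)

definition pos_real :: "complex \<Rightarrow> bool" where
  "pos_real z \<longleftrightarrow> Im z = 0 \<and> 0 < Re z"

definition positive_pts :: "point set" where
  "positive_pts = {p. \<forall>v\<in>coord_vars. pos_real (p v)}"

lemma pos_real_add: "pos_real a \<Longrightarrow> pos_real b \<Longrightarrow> pos_real (a + b)"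
  and pos_real_mult: "pos_real a \<Longrightarrow> pos_real b \<Longrightarrow> pos_real (a * b)"
  and pos_real_divide: "pos_real a \<Longrightarrow> pos_real b \<Longrightarrow> pos_real (a / b)"
  and pos_real_power: "pos_real a \<Longrightarrow> pos_real (a ^ n)"
  and pos_real_one: "pos_real 1"
  by (auto simp: pos_real_def Im_divide Re_divide complex_eq_iff Re_power_real Im_power_real)

lemmas pos_real_intros = pos_real_add pos_real_mult pos_real_divide pos_real_power pos_real_one

lemma positive_ptsD:
  assumes "p \<in> positive_pts"
  shows "pos_real (tau p k)" "pos_real (taub p k)" "pos_real (alph p k)"
    "pos_real (Qp p)" "pos_real (gam p)" "pos_real (uu p k)" "pos_real (vv p k)"
proof -
  have coords: "pos_real (p v)" if "v \<in> coord_vars" for v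
    using assms that by (simp add: positive_pts_def)
  then show "pos_real (tau p k)" "pos_real (taub p k)" "pos_real (Qp p)" "pos_real (gam p)"
    by (cases k rule: mod3_cases; simp add: tau_def taub_def Qp_def gam_def coord_vars_def)+
  then show "pos_real (alph p k)" "pos_real (uu p k)" "pos_real (vv p k)"
    using coords by (cases k rule: mod3_cases;
        auto simp: alph_def uu_def vv_def coord_vars_def Qp_def intro!: pos_real_intros)+
qed

lemma positive_pts_nonzero: "positive_pts \<subseteq> nonzero_pts"
  by (auto simp: positive_pts_def nonzero_pts_def pos_real_def)

lemma positive_pts_nonempty: "(\<lambda>_. 1) \<in> positive_pts"
  by (simp add: positive_pts_def pos_real_def)

lemma positive_ptsI: "(\<And>v. v \<in> coord_vars \<Longrightarrow> pos_real (q v)) \<Longrightarrow> q \<in> positive_pts"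
  by (simp add: positive_pts_def)

lemma sig_s_positive: "p \<in> positive_pts \<Longrightarrow> sig_s i p \<in> positive_pts"
  and sig_pi_positive: "p \<in> positive_pts \<Longrightarrow> sig_pi p \<in> positive_pts"
  and sig_w0_positive: "p \<in> positive_pts \<Longrightarrow> sig_w0 p \<in> positive_pts"
  and sig_w1_positive: "p \<in> positive_pts \<Longrightarrow> sig_w1 p \<in> positive_pts"
  and sig_r_positive: "p \<in> positive_pts \<Longrightarrow> sig_r p \<in> positive_pts"
  by (rule positive_ptsI, auto simp: coord_vars_def sig_s_def sig_pi_def sig_w0_def sig_w1_def
      sig_r_def positive_ptsD intro!: pos_real_intros)+

datatype gen = S int | Rot | W0 | W1 | R

fun gen_map :: "gen \<Rightarrow> point \<Rightarrow> point" where
  "gen_map (S i) = sig_s i"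
| "gen_map Rot = sig_pi"
| "gen_map W0 = sig_w0"
| "gen_map W1 = sig_w1"
| "gen_map R = sig_r"

lemma continuous_on_gen_map: "continuous_on nonzero_pts (gen_map g)"
  by (cases g) (simp_all add: continuous_on_sig_s continuous_on_sig_pi continuous_on_sig_w0
      continuous_on_sig_w1 continuous_on_sig_r)

lemma gen_map_positive: "p \<in> positive_pts \<Longrightarrow> gen_map g p \<in> positive_pts"
  by (cases g) (simp_all add: sig_s_positive sig_pi_positive sig_w0_positive sig_w1_positive
      sig_r_positive)

lemma gen_map_same_coords:
  assumes "same_coords p q"
  shows "gen_map g p = gen_map g q"
  by (cases g) (auto simp: same_coordsD[OF assms] sig_s_def sig_pi_def sig_w0_def sig_w1_def sig_r_def
      fun_eq_iff split: var.split)

fun word_map :: "gen list \<Rightarrow> point \<Rightarrow> point" where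
  "word_map [] = id"
| "word_map (g # w) = word_map w \<circ> gen_map g"

fun word_domain :: "gen list \<Rightarrow> point set" where
  "word_domain [] = nonzero_pts"
| "word_domain (g # w) = nonzero_pts \<inter> gen_map g -` word_domain w"

definition word_aut :: "gen list \<Rightarrow> aut" where
  "word_aut w = pull (word_map w)"

lemma word_map_append: "word_map (u @ v) = word_map v \<circ> word_map u"
  by (induction u) (simp_all add: comp_assoc)

lemma word_aut_append: "word_aut (u @ v) = word_aut u \<circ> word_aut v"
  by (simp add: word_aut_def word_map_append pull_def fun_eq_iff)

lemma word_aut_Nil: "word_aut [] = id"
  by (simp add: word_aut_def pull_def fun_eq_iff)

lemma word_aut_Cons: "word_aut (g # w) = pull (gen_map g) \<circ> word_aut w"
  using word_aut_append[of "[g]" w] by (simp add: word_aut_def pull_def fun_eq_iff)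

lemma word_aut_tau: "word_aut w (\<lambda>p. tau p k) = (\<lambda>p. tau (word_map w p) k)"
  by (simp add: word_aut_def pull_def comp_def)

lemma word_aut_gens:
  "word_aut [S i] = s i" "word_aut [Rot] = pi_a" "word_aut [W0] = w0" "word_aut [W1] = w1"
  "word_aut [R] = r"
  by (simp_all add: word_aut_Cons word_aut_Nil s_def pi_a_def w0_def w1_def r_def)

lemma word_map_positive: "p \<in> positive_pts \<Longrightarrow> word_map w p \<in> positive_pts"
  by (induction w arbitrary: p) (simp_all add: gen_map_positive)

lemma word_map_same_coords: "same_coords p q \<Longrightarrow> same_coords (word_map w p) (word_map w q)"
  by (induction w arbitrary: p q) (simp_all add: gen_map_same_coords same_coords_refl)

lemma word_domain_open_nbhd:
  "open (word_domain w) \<and> positive_pts \<subseteq> word_domain w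
    \<and> continuous_on (word_domain w) (word_map w)"
proof (induction w)
  case Nil
  show ?case using open_nonzero_pts positive_pts_nonzero by (simp add: continuous_on_id)
next
  case (Cons g w)
  then have "continuous_on (word_domain (g # w)) (word_map w \<circ> gen_map g)"
    by (intro continuous_on_compose continuous_on_subset[OF continuous_on_gen_map])
       (auto intro: continuous_on_subset)
  moreover have "positive_pts \<subseteq> word_domain (g # w)"
    using Cons positive_pts_nonzero gen_map_positive by (simp add: subset_iff)
  ultimately show ?case
    using Cons continuous_open_preimage[OF continuous_on_gen_map open_nonzero_pts] by simp
qed

section \<open>Equality near the positive points\<close>

text \<open>Equality in \<open>K\<close> (\<open>keq\<close>) asks for agreement on some nonempty open set and is
  not transitive.  Agreement on an open neighbourhood of the positive points is, and it is
  preserved by all generators.\<close>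

definition eq_near_pos :: "(point \<Rightarrow> 'a) \<Rightarrow> (point \<Rightarrow> 'a) \<Rightarrow> bool" where
  "eq_near_pos f g \<longleftrightarrow> (\<exists>U. open U \<and> positive_pts \<subseteq> U \<and> (\<forall>p\<in>U. f p = g p))"

lemma eq_near_pos_refl [simp]: "eq_near_pos f f"
  unfolding eq_near_pos_def by (intro exI[of _ UNIV]) simp

lemma eq_near_pos_sym: "eq_near_pos f g \<Longrightarrow> eq_near_pos g f"
  unfolding eq_near_pos_def by metis

lemma eq_near_pos_trans [trans]:
  assumes "eq_near_pos f g" "eq_near_pos g h"
  shows "eq_near_pos f h"
proof -
  obtain U V where "open U" "positive_pts \<subseteq> U" "\<forall>p\<in>U. f p = g p"
    and "open V" "positive_pts \<subseteq> V" "\<forall>p\<in>V. g p = h p"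
    using assms by (auto simp: eq_near_pos_def)
  then show ?thesis
    unfolding eq_near_pos_def by (intro exI[of _ "U \<inter> V"]) auto
qed

lemma eq_near_pos_subst [trans]:
  "f = g \<Longrightarrow> eq_near_pos g h \<Longrightarrow> eq_near_pos f h"
  "eq_near_pos f g \<Longrightarrow> g = h \<Longrightarrow> eq_near_pos f h"
  by simp_all

lemma eq_near_pos_comp_left: "eq_near_pos f g \<Longrightarrow> eq_near_pos (h \<circ> f) (h \<circ> g)"
  unfolding eq_near_pos_def by auto

lemma eq_near_pos_comp_word_map:
  assumes "eq_near_pos f g"
  shows "eq_near_pos (f \<circ> word_map w) (g \<circ> word_map w)"
proof -
  obtain U where U: "open U" "positive_pts \<subseteq> U" "\<forall>p\<in>U. f p = g p"
    using assms by (auto simp: eq_near_pos_def)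
  have "open (word_domain w \<inter> word_map w -` U)"
    using word_domain_open_nbhd continuous_open_preimage U(1) by blast
  moreover have "positive_pts \<subseteq> word_domain w \<inter> word_map w -` U"
    using word_domain_open_nbhd U(2) word_map_positive by blast
  ultimately show ?thesis
    unfolding eq_near_pos_def using U(3) by (intro exI[of _ "word_domain w \<inter> word_map w -` U"]) auto
qed

lemma eq_near_pos_word_aut: "eq_near_pos f g \<Longrightarrow> eq_near_pos (word_aut w f) (word_aut w g)"
  unfolding word_aut_def pull_def by (drule eq_near_pos_comp_word_map) (simp add: comp_def)

lemma eq_near_pos_keq: "eq_near_pos f g \<Longrightarrow> keq f g"
  unfolding eq_near_pos_def keq_def using positive_pts_nonempty by blast

text \<open>Words are compared through the ten coordinates only: the images of a point under two
  words that agree as maps of \<open>K\<close> may still differ at the redundant variables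
  \<open>Tau j\<close>, \<open>Taub j\<close> with \<open>j \<notin> {0,1,2}\<close>.\<close>

definition word_equiv :: "gen list \<Rightarrow> gen list \<Rightarrow> bool" where
  "word_equiv u v \<longleftrightarrow>
     eq_near_pos (\<lambda>p. restrict (word_map u p) coord_vars) (\<lambda>p. restrict (word_map v p) coord_vars)"

lemma same_coords_iff_restrict: "same_coords p q \<longleftrightarrow> restrict p coord_vars = restrict q coord_vars"
  by (auto simp: same_coords_def restrict_def fun_eq_iff)

lemma word_equivI:
  assumes "\<And>p. p \<in> word_domain u \<Longrightarrow> p \<in> word_domain v
    \<Longrightarrow> same_coords (word_map u p) (word_map v p)"
  shows "word_equiv u v"
  unfolding word_equiv_def eq_near_pos_def
  using word_domain_open_nbhd[of u] word_domain_open_nbhd[of v] assms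
  by (intro exI[of _ "word_domain u \<inter> word_domain v"]) (auto simp: same_coords_iff_restrict)

lemma word_equiv_refl [simp]: "word_equiv u u"
  by (simp add: word_equiv_def)

lemma word_equiv_sym: "word_equiv u v \<Longrightarrow> word_equiv v u"
  by (simp add: word_equiv_def eq_near_pos_sym)

lemma word_equiv_trans [trans]: "word_equiv u v \<Longrightarrow> word_equiv v w \<Longrightarrow> word_equiv u w"
  unfolding word_equiv_def by (rule eq_near_pos_trans)

lemma word_equiv_append_left: "word_equiv u v \<Longrightarrow> word_equiv (a @ u) (a @ v)"
  unfolding word_equiv_def word_map_append
  by (drule eq_near_pos_comp_word_map[where w = a]) (simp add: comp_def)

lemma word_equiv_append_right:
  assumes "word_equiv u v"
  shows "word_equiv (u @ b) (v @ b)"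
proof -
  obtain U where U: "open U" "positive_pts \<subseteq> U"
    "\<And>p. p \<in> U \<Longrightarrow> same_coords (word_map u p) (word_map v p)"
    using assms by (auto simp: word_equiv_def eq_near_pos_def same_coords_iff_restrict)
  then show ?thesis
    unfolding word_equiv_def eq_near_pos_def
    by (intro exI[of _ U]) (simp add: word_map_append word_map_same_coords flip: same_coords_iff_restrict)
qed

lemma word_equiv_cong: "word_equiv u v \<Longrightarrow> word_equiv (a @ u @ b) (a @ v @ b)"
  using word_equiv_append_left word_equiv_append_right by (metis append_assoc)

lemma word_equiv_tau:
  assumes "word_equiv u v"
  shows "eq_near_pos (word_aut u (\<lambda>p. tau p k)) (word_aut v (\<lambda>p. tau p k))"
proof -
  have "Tau (k mod 3) \<in> coord_vars"
    by (cases k rule: mod3_cases) (simp_all add: coord_vars_def)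
  then show ?thesis
    using eq_near_pos_comp_left[OF assms[unfolded word_equiv_def], of "\<lambda>q. q (Tau (k mod 3))"]
    by (simp add: word_aut_def pull_def comp_def tau_def)
qed

lemma word_equiv_S_S: "i \<in> {0,1,2} \<Longrightarrow> word_equiv [S i, S i] []"
  by (rule word_equivI) (auto intro: sig_s_involution)

lemma word_equiv_Rot_S: "i \<in> {0,1,2} \<Longrightarrow> word_equiv [Rot, S i] [S ((i+1) mod 3), Rot]"
  by (rule word_equivI) (auto intro: sig_pi_sig_s)

lemma word_equiv_Rot3: "word_equiv [Rot, Rot, Rot] []"
  by (rule word_equivI) (auto intro: sig_pi_cube)

lemma word_equiv_braid: "word_equiv [S 0, S 1, S 0] [S 1, S 0, S 1]"
  by (rule word_equivI) (auto intro: sig_s_braid)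

lemma word_equiv_W0_W0: "word_equiv [W0, W0] []"
  by (rule word_equivI) (auto intro: sig_w0_involution)

lemma word_equiv_R_R: "word_equiv [R, R] []"
  by (rule word_equivI) (auto intro: sig_r_involution)

lemma word_equiv_R_S: "i \<in> {0,1,2} \<Longrightarrow> word_equiv [R, S i] [S i, R]"
  by (rule word_equivI) (auto intro: sig_r_sig_s)

lemma word_equiv_W0_S: "i \<in> {0,1,2} \<Longrightarrow> word_equiv [W0, S i] [S i, W0]"
  by (rule word_equivI) (auto intro: sig_w0_sig_s)

lemma word_equiv_R_Rot: "word_equiv [R, Rot] [Rot, R]"
  by (rule word_equivI) (auto intro: sig_r_sig_pi)

lemma word_equiv_W0_Rot: "word_equiv [W0, Rot] [Rot, W0]"
  by (rule word_equivI) (auto intro: sig_w0_sig_pi)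

lemma word_equiv_W1: "word_equiv [W1] [R, W0, R]"
  by (rule word_equivI) (auto intro: sig_w1_via_r_w0)

lemma word_equiv_commute_letters:
  assumes "\<And>a b. a \<in> set x \<Longrightarrow> b \<in> set y \<Longrightarrow> word_equiv [a, b] [b, a]"
  shows "word_equiv (x @ y) (y @ x)"
  using assms
proof (induction x)
  case Nil
  show ?case by simp
next
  case (Cons a x)
  have head: "word_equiv (a # y) (y @ [a])"
    using Cons.prems
  proof (induction y)
    case (Cons b y)
    have "word_equiv ([a, b] @ y) ([b, a] @ y)"
      using Cons.prems by (intro word_equiv_append_right) simp
    also have "word_equiv \<dots> ([b] @ y @ [a])"
      using word_equiv_append_left[OF Cons.IH, of "[b]"] Cons.prems by simp
    finally show ?case by simp
  qed simp
  have "word_equiv ([a] @ y @ x) ((y @ [a]) @ x)"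
    using word_equiv_append_right[OF head, of x] by simp
  moreover have "word_equiv ([a] @ x @ y) ([a] @ y @ x)"
    using Cons by (intro word_equiv_append_left) simp
  ultimately show ?case by (simp add: word_equiv_trans)
qed

lemma reflection_letters_commute:
  assumes "a \<in> {R, W0}" "b \<in> {Rot, S 0, S 1, S 2}"
  shows "word_equiv [a, b] [b, a]"
  using assms word_equiv_R_S[of 0] word_equiv_R_S[of 1] word_equiv_R_S[of 2]
    word_equiv_W0_S[of 0] word_equiv_W0_S[of 1] word_equiv_W0_S[of 2]
  by (auto simp: word_equiv_R_Rot word_equiv_W0_Rot)

lemma reflections_commute:
  assumes "set x \<subseteq> {R, W0}" "set y \<subseteq> {Rot, S 0, S 1, S 2}"
  shows "word_equiv (x @ y) (y @ x)"
  using assms by (intro word_equiv_commute_letters reflection_letters_commute) auto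

lemma W1_commute:
  assumes "set y \<subseteq> {Rot, S 0, S 1, S 2}"
  shows "word_equiv ([W1] @ y) (y @ [W1])"
proof -
  have "word_equiv ([W1] @ y) ([R, W0, R] @ y)"
    using word_equiv_W1 by (rule word_equiv_append_right)
  also have "word_equiv \<dots> (y @ [R, W0, R])"
    using assms by (intro reflections_commute) auto
  also have "word_equiv \<dots> (y @ [W1])"
    using word_equiv_append_left[OF word_equiv_sym[OF word_equiv_W1]] .
  finally show ?thesis .
qed

lemma T1_T2_commute: "word_equiv [Rot, S 2, S 1, S 1, Rot, S 2] [S 1, Rot, S 2, Rot, S 2, S 1]"
proof -
  have "word_equiv [Rot, S 2, S 1, S 1, Rot, S 2] [Rot, S 2, Rot, S 2]"
    using word_equiv_cong[OF word_equiv_S_S[of 1], of "[Rot, S 2]" "[Rot, S 2]"] by simp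
  also have "word_equiv \<dots> [S 1, S 1, Rot, S 2, Rot, S 2]"
    using word_equiv_cong[OF word_equiv_sym[OF word_equiv_S_S[of 1]],
        of "[]" "[Rot, S 2, Rot, S 2]"]
    by simp
  also have "word_equiv \<dots> [S 1, S 1, S 0, Rot, Rot, S 2]"
    using word_equiv_cong[OF word_equiv_Rot_S[of 2], of "[S 1, S 1]" "[Rot, S 2]"] by simp
  also have "word_equiv \<dots> [S 1, S 1, S 0, Rot, S 0, Rot]"
    using word_equiv_cong[OF word_equiv_Rot_S[of 2], of "[S 1, S 1, S 0, Rot]" "[]"] by simp
  also have "word_equiv \<dots> [S 1, S 1, S 0, S 1, Rot, Rot]"
    using word_equiv_cong[OF word_equiv_Rot_S[of 0], of "[S 1, S 1, S 0]" "[Rot]"] by simp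
  also have "word_equiv \<dots> [S 1, S 0, S 1, S 0, Rot, Rot]"
    using word_equiv_cong[OF word_equiv_sym[OF word_equiv_braid], of "[S 1]" "[Rot, Rot]"] by simp
  also have "word_equiv \<dots> [S 1, S 0, S 1, Rot, S 2, Rot]"
    using word_equiv_cong[OF word_equiv_sym[OF word_equiv_Rot_S[of 2]],
        of "[S 1, S 0, S 1]" "[Rot]"]
    by simp
  also have "word_equiv \<dots> [S 1, S 0, S 1, Rot, Rot, S 1]"
    using word_equiv_cong[OF word_equiv_sym[OF word_equiv_Rot_S[of 1]],
        of "[S 1, S 0, S 1, Rot]" "[]"]
    by simp
  also have "word_equiv \<dots> [S 1, S 0, Rot, S 0, Rot, S 1]"
    using word_equiv_cong[OF word_equiv_sym[OF word_equiv_Rot_S[of 0]],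
        of "[S 1, S 0]" "[Rot, S 1]"]
    by simp
  also have "word_equiv \<dots> [S 1, S 0, Rot, Rot, S 2, S 1]"
    using word_equiv_cong[OF word_equiv_sym[OF word_equiv_Rot_S[of 2]],
        of "[S 1, S 0, Rot]" "[S 1]"]
    by simp
  also have "word_equiv \<dots> [S 1, Rot, S 2, Rot, S 2, S 1]"
    using word_equiv_cong[OF word_equiv_sym[OF word_equiv_Rot_S[of 2]],
        of "[S 1]" "[Rot, S 2, S 1]"]
    by simp
  finally show ?thesis .
qed

lemma S0_T1_conj: "word_equiv [S 0, Rot, S 2, S 1] [S 1, S 2, Rot, Rot, S 2, Rot, Rot, S 1, S 0]"
proof -
  have "word_equiv [S 0, Rot, S 2, S 1] [S 0, Rot, S 2, S 0, S 0, S 1]"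
    using word_equiv_cong[OF word_equiv_sym[OF word_equiv_S_S[of 0]], of "[S 0, Rot, S 2]" "[S 1]"]
    by simp
  also have "word_equiv \<dots> [S 0, Rot, S 2, S 0, S 0, S 1, S 0, S 0]"
    using word_equiv_cong[OF word_equiv_sym[OF word_equiv_S_S[of 0]],
        of "[S 0, Rot, S 2, S 0, S 0, S 1]" "[]"]
    by simp
  also have "word_equiv \<dots> [S 0, S 0, Rot, S 0, S 0, S 1, S 0, S 0]"
    using word_equiv_cong[OF word_equiv_Rot_S[of 2], of "[S 0]" "[S 0, S 0, S 1, S 0, S 0]"] by simp
  also have "word_equiv \<dots> [Rot, S 0, S 0, S 1, S 0, S 0]"
    using word_equiv_cong[OF word_equiv_S_S[of 0], of "[]" "[Rot, S 0, S 0, S 1, S 0, S 0]"] by simp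
  also have "word_equiv \<dots> [S 1, Rot, S 0, S 1, S 0, S 0]"
    using word_equiv_cong[OF word_equiv_Rot_S[of 0], of "[]" "[S 0, S 1, S 0, S 0]"] by simp
  also have "word_equiv \<dots> [S 1, Rot, S 1, S 0, S 1, S 0]"
    using word_equiv_cong[OF word_equiv_braid, of "[S 1, Rot]" "[S 0]"] by simp
  also have "word_equiv \<dots> [S 1, Rot, S 1, S 0, Rot, Rot, Rot, S 1, S 0]"
    using word_equiv_cong[OF word_equiv_sym[OF word_equiv_Rot3],
        of "[S 1, Rot, S 1, S 0]" "[S 1, S 0]"]
    by simp
  also have "word_equiv \<dots> [S 1, Rot, S 1, Rot, S 2, Rot, Rot, S 1, S 0]"
    using word_equiv_cong[OF word_equiv_sym[OF word_equiv_Rot_S[of 2]],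
        of "[S 1, Rot, S 1]" "[Rot, Rot, S 1, S 0]"]
    by simp
  also have "word_equiv \<dots> [S 1, S 2, Rot, Rot, S 2, Rot, Rot, S 1, S 0]"
    using word_equiv_cong[OF word_equiv_Rot_S[of 1], of "[S 1]" "[Rot, S 2, Rot, Rot, S 1, S 0]"]
    by simp
  finally show ?thesis .
qed

lemma S0_T2_conj: "word_equiv [S 0, S 1, Rot, S 2] [S 1, Rot, S 2, S 0]"
proof -
  have "word_equiv [S 0, S 1, Rot, S 2] [S 0, S 1, S 0, Rot]"
    using word_equiv_cong[OF word_equiv_Rot_S[of 2], of "[S 0, S 1]" "[]"] by simp
  also have "word_equiv \<dots> [S 1, S 0, S 1, Rot]"
    using word_equiv_cong[OF word_equiv_braid, of "[]" "[Rot]"] by simp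
  also have "word_equiv \<dots> [S 1, S 0, Rot, S 0]"
    using word_equiv_cong[OF word_equiv_sym[OF word_equiv_Rot_S[of 0]], of "[S 1, S 0]" "[]"]
    by simp
  also have "word_equiv \<dots> [S 1, Rot, S 2, S 0]"
    using word_equiv_cong[OF word_equiv_sym[OF word_equiv_Rot_S[of 2]], of "[S 1]" "[S 0]"] by simp
  finally show ?thesis .
qed

lemma S1_T2_conj: "word_equiv [S 1, S 1, Rot, S 2] [Rot, S 2, S 1, S 1]"
proof -
  have "word_equiv [S 1, S 1, Rot, S 2] [Rot, S 2]"
    using word_equiv_cong[OF word_equiv_S_S[of 1], of "[]" "[Rot, S 2]"] by simp
  also have "word_equiv \<dots> [Rot, S 2, S 1, S 1]"
    using word_equiv_cong[OF word_equiv_sym[OF word_equiv_S_S[of 1]], of "[Rot, S 2]" "[]"] by simp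
  finally show ?thesis .
qed

lemma S2_T1_conj: "word_equiv [S 2, Rot, S 2, S 1] [Rot, S 2, S 1, S 2]"
proof -
  have "word_equiv [S 2, Rot, S 2, S 1] [Rot, S 1, S 2, S 1]"
    using word_equiv_cong[OF word_equiv_sym[OF word_equiv_Rot_S[of 1]], of "[]" "[S 2, S 1]"]
    by simp
  also have "word_equiv \<dots> [Rot, S 1, S 2, S 1, Rot, Rot, Rot]"
    using word_equiv_cong[OF word_equiv_sym[OF word_equiv_Rot3], of "[Rot, S 1, S 2, S 1]" "[]"]
    by simp
  also have "word_equiv \<dots> [Rot, S 1, S 2, Rot, S 0, Rot, Rot]"
    using word_equiv_cong[OF word_equiv_sym[OF word_equiv_Rot_S[of 0]],
        of "[Rot, S 1, S 2]" "[Rot, Rot]"]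
    by simp
  also have "word_equiv \<dots> [Rot, S 1, Rot, S 1, S 0, Rot, Rot]"
    using word_equiv_cong[OF word_equiv_sym[OF word_equiv_Rot_S[of 1]],
        of "[Rot, S 1]" "[S 0, Rot, Rot]"]
    by simp
  also have "word_equiv \<dots> [Rot, Rot, S 0, S 1, S 0, Rot, Rot]"
    using word_equiv_cong[OF word_equiv_sym[OF word_equiv_Rot_S[of 0]],
        of "[Rot]" "[S 1, S 0, Rot, Rot]"]
    by simp
  also have "word_equiv \<dots> [Rot, Rot, S 1, S 0, S 1, Rot, Rot]"
    using word_equiv_cong[OF word_equiv_braid, of "[Rot, Rot]" "[Rot, Rot]"] by simp
  also have "word_equiv \<dots> [Rot, S 2, Rot, S 0, S 1, Rot, Rot]"
    using word_equiv_cong[OF word_equiv_Rot_S[of 1], of "[Rot]" "[S 0, S 1, Rot, Rot]"] by simp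
  also have "word_equiv \<dots> [Rot, S 2, S 1, Rot, S 1, Rot, Rot]"
    using word_equiv_cong[OF word_equiv_Rot_S[of 0], of "[Rot, S 2]" "[S 1, Rot, Rot]"] by simp
  also have "word_equiv \<dots> [Rot, S 2, S 1, S 2, Rot, Rot, Rot]"
    using word_equiv_cong[OF word_equiv_Rot_S[of 1], of "[Rot, S 2, S 1]" "[Rot, Rot]"] by simp
  also have "word_equiv \<dots> [Rot, S 2, S 1, S 2]"
    using word_equiv_cong[OF word_equiv_Rot3, of "[Rot, S 2, S 1, S 2]" "[]"] by simp
  finally show ?thesis .
qed

lemma S2_T2_conj: "word_equiv [S 2, S 1, Rot, S 2] [S 1, S 2, Rot, Rot, S 2, Rot, Rot, S 1, S 2]"
proof -
  have "word_equiv [S 2, S 1, Rot, S 2] [S 2, Rot, S 0, S 2]"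
    using word_equiv_cong[OF word_equiv_sym[OF word_equiv_Rot_S[of 0]], of "[S 2]" "[S 2]"] by simp
  also have "word_equiv \<dots> [S 2, Rot, S 0, S 1, S 1, S 2]"
    using word_equiv_cong[OF word_equiv_sym[OF word_equiv_S_S[of 1]], of "[S 2, Rot, S 0]" "[S 2]"]
    by simp
  also have "word_equiv \<dots> [Rot, S 1, S 0, S 1, S 1, S 2]"
    using word_equiv_cong[OF word_equiv_sym[OF word_equiv_Rot_S[of 1]],
        of "[]" "[S 0, S 1, S 1, S 2]"]
    by simp
  also have "word_equiv \<dots> [Rot, S 0, S 1, S 0, S 1, S 2]"
    using word_equiv_cong[OF word_equiv_sym[OF word_equiv_braid], of "[Rot]" "[S 1, S 2]"] by simp
  also have "word_equiv \<dots> [Rot, S 0, S 1, S 0, Rot, Rot, Rot, S 1, S 2]"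
    using word_equiv_cong[OF word_equiv_sym[OF word_equiv_Rot3],
        of "[Rot, S 0, S 1, S 0]" "[S 1, S 2]"]
    by simp
  also have "word_equiv \<dots> [Rot, S 0, S 1, Rot, S 2, Rot, Rot, S 1, S 2]"
    using word_equiv_cong[OF word_equiv_sym[OF word_equiv_Rot_S[of 2]],
        of "[Rot, S 0, S 1]" "[Rot, Rot, S 1, S 2]"]
    by simp
  also have "word_equiv \<dots> [S 1, Rot, S 1, Rot, S 2, Rot, Rot, S 1, S 2]"
    using word_equiv_cong[OF word_equiv_Rot_S[of 0], of "[]" "[S 1, Rot, S 2, Rot, Rot, S 1, S 2]"]
    by simp
  also have "word_equiv \<dots> [S 1, S 2, Rot, Rot, S 2, Rot, Rot, S 1, S 2]"
    using word_equiv_cong[OF word_equiv_Rot_S[of 1], of "[S 1]" "[Rot, S 2, Rot, Rot, S 1, S 2]"]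
    by simp
  finally show ?thesis .
qed

lemma Rot_T1_conj: "word_equiv [Rot, Rot, S 2, S 1] [S 1, Rot, S 2, Rot]"
proof -
  have "word_equiv [Rot, Rot, S 2, S 1] [Rot, S 0, Rot, S 1]"
    using word_equiv_cong[OF word_equiv_Rot_S[of 2], of "[Rot]" "[S 1]"] by simp
  also have "word_equiv \<dots> [S 1, Rot, Rot, S 1]"
    using word_equiv_cong[OF word_equiv_Rot_S[of 0], of "[]" "[Rot, S 1]"] by simp
  also have "word_equiv \<dots> [S 1, Rot, S 2, Rot]"
    using word_equiv_cong[OF word_equiv_Rot_S[of 1], of "[S 1, Rot]" "[]"] by simp
  finally show ?thesis .
qed

lemma Rot_T2_conj: "word_equiv [Rot, S 1, Rot, S 2] [S 1, S 2, Rot, Rot, S 2, Rot, Rot, S 1, Rot]"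
proof -
  have "word_equiv [Rot, S 1, Rot, S 2] [Rot, S 0, S 0, S 1, Rot, S 2]"
    using word_equiv_cong[OF word_equiv_sym[OF word_equiv_S_S[of 0]], of "[Rot]" "[S 1, Rot, S 2]"]
    by simp
  also have "word_equiv \<dots> [S 1, Rot, S 0, S 1, Rot, S 2]"
    using word_equiv_cong[OF word_equiv_Rot_S[of 0], of "[]" "[S 0, S 1, Rot, S 2]"] by simp
  also have "word_equiv \<dots> [S 1, Rot, S 0, S 1, S 0, Rot]"
    using word_equiv_cong[OF word_equiv_Rot_S[of 2], of "[S 1, Rot, S 0, S 1]" "[]"] by simp
  also have "word_equiv \<dots> [S 1, Rot, S 1, S 0, S 1, Rot]"
    using word_equiv_cong[OF word_equiv_braid, of "[S 1, Rot]" "[Rot]"] by simp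
  also have "word_equiv \<dots> [S 1, Rot, S 1, S 0, Rot, Rot, Rot, S 1, Rot]"
    using word_equiv_cong[OF word_equiv_sym[OF word_equiv_Rot3],
        of "[S 1, Rot, S 1, S 0]" "[S 1, Rot]"]
    by simp
  also have "word_equiv \<dots> [S 1, Rot, S 1, Rot, S 2, Rot, Rot, S 1, Rot]"
    using word_equiv_cong[OF word_equiv_sym[OF word_equiv_Rot_S[of 2]],
        of "[S 1, Rot, S 1]" "[Rot, Rot, S 1, Rot]"]
    by simp
  also have "word_equiv \<dots> [S 1, S 2, Rot, Rot, S 2, Rot, Rot, S 1, Rot]"
    using word_equiv_cong[OF word_equiv_Rot_S[of 1], of "[S 1]" "[Rot, S 2, Rot, Rot, S 1, Rot]"]
    by simp
  finally show ?thesis .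
qed

lemma R_T4_conj: "word_equiv [R, R, W0] [W0, R, R]"
proof -
  have "word_equiv [R, R, W0] [W0]"
    using word_equiv_cong[OF word_equiv_R_R, of "[]" "[W0]"] by simp
  also have "word_equiv \<dots> [W0, R, R]"
    using word_equiv_cong[OF word_equiv_sym[OF word_equiv_R_R], of "[W0]" "[]"] by simp
  finally show ?thesis .
qed

definition inverse_words :: "gen list \<Rightarrow> gen list \<Rightarrow> bool" where
  "inverse_words x y \<longleftrightarrow> word_equiv (x @ y) [] \<and> word_equiv (y @ x) []"

lemma inverse_words_sym: "inverse_words x y \<Longrightarrow> inverse_words y x"
  by (simp add: inverse_words_def)

lemma inverse_words_append:
  assumes "inverse_words x y" "inverse_words x' y'"
  shows "inverse_words (x @ x') (y' @ y)"
proof -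
  have "word_equiv (x @ (x' @ y') @ y) (x @ [] @ y)" "word_equiv (y' @ (y @ x) @ x') (y' @ [] @ x')"
    using assms by (auto simp only: inverse_words_def intro!: word_equiv_cong)
  then show ?thesis
    using assms unfolding inverse_words_def by (auto intro: word_equiv_trans)
qed

lemma word_equiv_cancel_right:
  assumes "inverse_words x y" "word_equiv (u @ x) (v @ x)"
  shows "word_equiv u v"
proof -
  have "word_equiv u (u @ x @ y)" "word_equiv (v @ x @ y) v"
    using assms(1) word_equiv_cong[of "x @ y" "[]"] unfolding inverse_words_def
    by (metis append_Nil2 word_equiv_sym)+
  moreover have "word_equiv (u @ x @ y) (v @ x @ y)"
    using word_equiv_append_right[OF assms(2)] by simp
  ultimately show ?thesis by (blast intro: word_equiv_trans)
qed

lemma inverse_words_S: "i \<in> {0,1,2} \<Longrightarrow> inverse_words [S i] [S i]"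
  and inverse_words_Rot: "inverse_words [Rot] [Rot, Rot]"
  and inverse_words_W0: "inverse_words [W0] [W0]"
  and inverse_words_R: "inverse_words [R] [R]"
  by (simp_all add: inverse_words_def word_equiv_S_S word_equiv_Rot3 word_equiv_W0_W0 word_equiv_R_R)

lemma concat_replicate_Suc: "concat (replicate (Suc n) x) = concat (replicate n x) @ x"
  by (induction n) simp_all

definition word_power :: "gen list \<Rightarrow> gen list \<Rightarrow> int \<Rightarrow> gen list" where
  "word_power x y k =
     (if 0 \<le> k then concat (replicate (nat k) x) else concat (replicate (nat (- k)) y))"

lemma word_power_neg: "word_power x y (- k) = word_power y x k"
  by (simp add: word_power_def)

lemma word_power_zero [simp]: "word_power x y 0 = []"
  by (simp add: word_power_def)

lemma word_power_succ:
  assumes "inverse_words x y"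
  shows "word_equiv (word_power x y (k + 1)) (word_power x y k @ x)"
proof (cases "0 \<le> k")
  case True
  then have "nat (k + 1) = Suc (nat k)" by simp
  with True show ?thesis
    by (simp add: word_power_def concat_replicate_Suc del: replicate_Suc)
next
  case False
  define n where "n = nat (- (k + 1))"
  have "nat (- k) = Suc n" using False by (simp add: n_def)
  then have "word_power x y (k + 1) = concat (replicate n y)"
    "word_power x y k @ x = concat (replicate n y) @ y @ x"
    using False by (auto simp: word_power_def n_def concat_replicate_Suc simp del: replicate_Suc)
  moreover have "word_equiv (concat (replicate n y) @ []) (concat (replicate n y) @ y @ x)"
    using assms by (intro word_equiv_append_left) (simp add: inverse_words_def word_equiv_sym)
  ultimately show ?thesis by simp
qed

lemma word_power_pred:
  assumes "inverse_words x y"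
  shows "word_equiv (word_power x y (k - 1)) (word_power x y k @ y)"
proof -
  have "word_power x y (k - 1) = word_power y x (- k + 1)" "word_power x y k = word_power y x (- k)"
    using word_power_neg[of x y "- k + 1"] word_power_neg[of x y "- k"] by simp_all
  then show ?thesis
    using word_power_succ[OF inverse_words_sym[OF assms], of "- k"] by simp
qed

lemma word_power_add:
  assumes "inverse_words x y"
  shows "word_equiv (word_power x y a @ word_power x y b) (word_power x y (a + b))"
proof (induction b rule: int_induct[where k = 0])
  case base
  show ?case by simp
next
  case (step1 b)
  have "word_equiv (word_power x y a @ word_power x y (b + 1)) ((word_power x y a @ word_power x y b) @ x)"
    using word_equiv_append_left[OF word_power_succ[OF assms]] by simp
  also have "word_equiv \<dots> (word_power x y (a + b) @ x)"
    using step1.IH by (rule word_equiv_append_right)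
  also have "word_equiv \<dots> (word_power x y (a + (b + 1)))"
    using word_equiv_sym[OF word_power_succ[OF assms, of "a + b"]] by (simp add: add.assoc)
  finally show ?case .
next
  case (step2 b)
  have "word_equiv (word_power x y a @ word_power x y (b - 1)) ((word_power x y a @ word_power x y b) @ y)"
    using word_equiv_append_left[OF word_power_pred[OF assms]] by simp
  also have "word_equiv \<dots> (word_power x y (a + b) @ y)"
    using step2.IH by (rule word_equiv_append_right)
  also have "word_equiv \<dots> (word_power x y (a + (b - 1)))"
    using word_equiv_sym[OF word_power_pred[OF assms, of "a + b"]] by (simp add: add_diff_eq)
  finally show ?case .
qed

lemma word_equiv_conj_inverse:
  assumes "inverse_words x y" "inverse_words x' y'" "word_equiv (g @ x) (x' @ g)"
  shows "word_equiv (g @ y) (y' @ g)"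
proof (rule word_equiv_cancel_right[OF assms(1)])
  have "word_equiv ((g @ y) @ x) (g @ [] @ [])"
    using assms(1) word_equiv_cong[of "y @ x" "[]" g "[]"] by (simp add: inverse_words_def)
  also have "word_equiv \<dots> ([] @ (y' @ x') @ g)"
    using assms(2) word_equiv_cong[of "y' @ x'" "[]" "[]" g] by (simp add: inverse_words_def word_equiv_sym)
  also have "word_equiv \<dots> (y' @ (g @ x) @ [])"
    using word_equiv_cong[OF word_equiv_sym[OF assms(3)], of y' "[]"] by simp
  finally show "word_equiv ((g @ y) @ x) ((y' @ g) @ x)" by simp
qed

lemma word_power_conj:
  assumes "inverse_words x y" "inverse_words x' y'" "word_equiv (g @ x) (x' @ g)"
  shows "word_equiv (g @ word_power x y k) (word_power x' y' k @ g)"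
proof (induction k rule: int_induct[where k = 0])
  case base
  show ?case by simp
next
  case (step1 k)
  have "word_equiv (g @ word_power x y (k + 1)) ((g @ word_power x y k) @ x)"
    using word_equiv_append_left[OF word_power_succ[OF assms(1)]] by simp
  also have "word_equiv \<dots> (word_power x' y' k @ g @ x)"
    using word_equiv_append_right[OF step1.IH] by simp
  also have "word_equiv \<dots> ((word_power x' y' k @ x') @ g)"
    using word_equiv_append_left[OF assms(3)] by simp
  also have "word_equiv \<dots> (word_power x' y' (k + 1) @ g)"
    using word_equiv_append_right[OF word_equiv_sym[OF word_power_succ[OF assms(2)]]] .
  finally show ?case .
next
  case (step2 k)
  have "word_equiv (g @ word_power x y (k - 1)) ((g @ word_power x y k) @ y)"
    using word_equiv_append_left[OF word_power_pred[OF assms(1)]] by simp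
  also have "word_equiv \<dots> (word_power x' y' k @ g @ y)"
    using word_equiv_append_right[OF step2.IH] by simp
  also have "word_equiv \<dots> ((word_power x' y' k @ y') @ g)"
    using word_equiv_append_left[OF word_equiv_conj_inverse[OF assms]] by simp
  also have "word_equiv \<dots> (word_power x' y' (k - 1) @ g)"
    using word_equiv_append_right[OF word_equiv_sym[OF word_power_pred[OF assms(2)]]] .
  finally show ?case .
qed

lemma word_power_commute:
  assumes "inverse_words x y" "inverse_words x' y'" "word_equiv (x @ x') (x' @ x)"
  shows "word_equiv (word_power x y a @ word_power x' y' b) (word_power x' y' b @ word_power x y a)"
proof -
  have "word_equiv (x' @ word_power x y a) (word_power x y a @ x')"
    using word_power_conj[OF assms(1,1) word_equiv_sym[OF assms(3)]] .
  then show ?thesis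
    using word_power_conj[OF assms(2,2) word_equiv_sym] by blast
qed

lemma word_equiv_conj_append:
  assumes "word_equiv (g @ x) (x' @ g)" "word_equiv (g @ y) (y' @ g)"
  shows "word_equiv (g @ x @ y) ((x' @ y') @ g)"
proof -
  have "word_equiv ((g @ x) @ y) ((x' @ g) @ y)"
    using assms(1) by (rule word_equiv_append_right)
  also have "word_equiv \<dots> (x' @ y' @ g)"
    using word_equiv_append_left[OF assms(2)] by simp
  finally show ?thesis by simp
qed

lemma word_aut_word_power: "word_aut (word_power x y k) = ipow (word_aut x) (word_aut y) k"
proof -
  have "word_aut (concat (replicate n z)) = word_aut z ^^ n" for z n
    by (induction n) (simp_all add: word_aut_Nil word_aut_append)
  then show ?thesis by (simp add: word_power_def ipow_def)
qed

section \<open>The translation lattice\<close>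

definition T1_word :: "gen list" where "T1_word = [Rot, S 2, S 1]"

definition T1_inv_word :: "gen list" where "T1_inv_word = [S 1, S 2, Rot, Rot]"

definition T2_word :: "gen list" where "T2_word = [S 1, Rot, S 2]"

definition T2_inv_word :: "gen list" where "T2_inv_word = [S 2, Rot, Rot, S 1]"

definition T4_word :: "gen list" where "T4_word = [R, W0]"

definition T4_inv_word :: "gen list" where "T4_inv_word = [W0, R]"

lemma inverse_T_words:
  "inverse_words T1_word T1_inv_word" "inverse_words T2_word T2_inv_word"
  "inverse_words T4_word T4_inv_word"
  using inverse_words_append[OF inverse_words_Rot
      inverse_words_append[OF inverse_words_S inverse_words_S], of 2 1]
    inverse_words_append[OF inverse_words_S
      inverse_words_append[OF inverse_words_Rot inverse_words_S], of 1 2]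
    inverse_words_append[OF inverse_words_R inverse_words_W0]
  by (simp_all add: T1_word_def T1_inv_word_def T2_word_def T2_inv_word_def T4_word_def T4_inv_word_def)

lemma commute_T_words:
  "word_equiv (T2_word @ T1_word) (T1_word @ T2_word)"
  "word_equiv (T4_word @ T1_word) (T1_word @ T4_word)"
  "word_equiv (T4_word @ T2_word) (T2_word @ T4_word)"
  using word_equiv_sym[OF T1_T2_commute] reflections_commute[of T4_word T1_word]
    reflections_commute[of T4_word T2_word]
  by (simp_all add: T1_word_def T2_word_def T4_word_def)

definition transl :: "int \<Rightarrow> int \<Rightarrow> int \<Rightarrow> gen list" where
  "transl a b c = word_power T1_word T1_inv_word a @ word_power T2_word T2_inv_word b
     @ word_power T4_word T4_inv_word c"

lemma transl_zero [simp]: "transl 0 0 0 = []"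
  by (simp add: transl_def)

lemma transl_add: "word_equiv (transl a b c @ transl a' b' c') (transl (a + a') (b + b') (c + c'))"
proof -
  let ?A = "word_power T1_word T1_inv_word" and ?B = "word_power T2_word T2_inv_word"
    and ?C = "word_power T4_word T4_inv_word"
  note commute = word_power_commute[OF inverse_T_words(2,1) commute_T_words(1), of b a']
    word_power_commute[OF inverse_T_words(3,1) commute_T_words(2), of c a']
    word_power_commute[OF inverse_T_words(3,2) commute_T_words(3), of c b']
  note add = word_power_add[OF inverse_T_words(1), of a a'] word_power_add[OF inverse_T_words(2), of b b']
    word_power_add[OF inverse_T_words(3), of c c']
  have "word_equiv (transl a b c @ transl a' b' c') (?A a @ ?B b @ ?A a' @ ?C c @ ?B b' @ ?C c')"
    using word_equiv_cong[OF commute(2), of "?A a @ ?B b" "?B b' @ ?C c'"] by (simp add: transl_def)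
  also have "word_equiv \<dots> (?A a @ ?A a' @ ?B b @ ?C c @ ?B b' @ ?C c')"
    using word_equiv_cong[OF commute(1), of "?A a" "?C c @ ?B b' @ ?C c'"] by simp
  also have "word_equiv \<dots> (?A a @ ?A a' @ ?B b @ ?B b' @ ?C c @ ?C c')"
    using word_equiv_cong[OF commute(3), of "?A a @ ?A a' @ ?B b" "?C c'"] by simp
  also have "word_equiv \<dots> (?A (a + a') @ ?B b @ ?B b' @ ?C c @ ?C c')"
    using word_equiv_cong[OF add(1), of "[]" "?B b @ ?B b' @ ?C c @ ?C c'"] by simp
  also have "word_equiv \<dots> (?A (a + a') @ ?B (b + b') @ ?C c @ ?C c')"
    using word_equiv_cong[OF add(2), of "?A (a + a')" "?C c @ ?C c'"] by simp
  also have "word_equiv \<dots> (?A (a + a') @ ?B (b + b') @ ?C (c + c'))"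
    using word_equiv_cong[OF add(3), of "?A (a + a') @ ?B (b + b')" "[]"] by simp
  finally show ?thesis by (simp add: transl_def)
qed

lemma inverse_words_transl: "inverse_words (transl a b c) (transl (- a) (- b) (- c))"
  using transl_add[of a b c "- a" "- b" "- c"] transl_add[of "- a" "- b" "- c" a b c]
  by (simp add: inverse_words_def)

lemma transl_conj_scale:
  assumes "word_equiv (g @ transl a b c) (transl a' b' c' @ g)"
  shows "word_equiv (g @ transl (k * a) (k * b) (k * c)) (transl (k * a') (k * b') (k * c') @ g)"
proof (induction k rule: int_induct[where k = 0])
  case base
  show ?case by simp
next
  case (step1 k)
  have "word_equiv (g @ transl ((k + 1) * a) ((k + 1) * b) ((k + 1) * c))
      (g @ transl (k * a) (k * b) (k * c) @ transl a b c)"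
    using word_equiv_append_left[OF word_equiv_sym[OF transl_add]] by (simp add: distrib_right)
  also have "word_equiv \<dots> (transl (k * a') (k * b') (k * c') @ transl a' b' c' @ g)"
    using word_equiv_conj_append[OF step1.IH assms] by simp
  also have "word_equiv \<dots> (transl ((k + 1) * a') ((k + 1) * b') ((k + 1) * c') @ g)"
    using word_equiv_append_right[OF transl_add] by (simp add: distrib_right)
  finally show ?case .
next
  case (step2 k)
  have inv: "word_equiv (g @ transl (- a) (- b) (- c)) (transl (- a') (- b') (- c') @ g)"
    using word_equiv_conj_inverse[OF inverse_words_transl inverse_words_transl assms] .
  have "word_equiv (g @ transl ((k - 1) * a) ((k - 1) * b) ((k - 1) * c))
      (g @ transl (k * a) (k * b) (k * c) @ transl (- a) (- b) (- c))"
    using word_equiv_append_left[OF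
        word_equiv_sym[OF transl_add[of "k * a" "k * b" "k * c" "- a" "- b" "- c"]]]
    by (simp add: left_diff_distrib)
  also have "word_equiv \<dots> (transl (k * a') (k * b') (k * c') @ transl (- a') (- b') (- c') @ g)"
    using word_equiv_conj_append[OF step2.IH inv] by simp
  also have "word_equiv \<dots> (transl ((k - 1) * a') ((k - 1) * b') ((k - 1) * c') @ g)"
    using word_equiv_append_right[OF transl_add[of "k * a'" "k * b'" "k * c'" "- a'" "- b'" "- c'"]]
    by (simp add: left_diff_distrib)
  finally show ?case .
qed

lemma transl_conj:
  assumes "word_equiv (g @ transl 1 0 0) (transl a1 b1 c1 @ g)"
    and "word_equiv (g @ transl 0 1 0) (transl a2 b2 c2 @ g)"
    and "word_equiv (g @ transl 0 0 1) (transl a3 b3 c3 @ g)"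
  shows "word_equiv (g @ transl n m N)
    (transl (n * a1 + m * a2 + N * a3) (n * b1 + m * b2 + N * b3) (n * c1 + m * c2 + N * c3) @ g)"
proof -
  have "word_equiv (g @ transl n 0 0 @ transl 0 m 0 @ transl 0 0 N) (g @ transl n 0 0 @ transl 0 m N)"
    using word_equiv_append_left[OF transl_add[of 0 m 0 0 0 N], of "g @ transl n 0 0"] by simp
  also have "word_equiv \<dots> (g @ transl n m N)"
    using word_equiv_append_left[OF transl_add[of n 0 0 0 m N]] by simp
  finally have "word_equiv (g @ transl n m N) (g @ transl n 0 0 @ transl 0 m 0 @ transl 0 0 N)"
    by (rule word_equiv_sym)
  also have "word_equiv \<dots> (transl (n * a1) (n * b1) (n * c1) @ transl (m * a2) (m * b2) (m * c2)
      @ transl (N * a3) (N * b3) (N * c3) @ g)"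
    using word_equiv_conj_append[OF transl_conj_scale[OF assms(1), of n]
        word_equiv_conj_append[OF transl_conj_scale[OF assms(2), of m]
          transl_conj_scale[OF assms(3), of N]]]
    by simp
  also have "word_equiv \<dots> (transl (n * a1) (n * b1) (n * c1)
      @ transl (m * a2 + N * a3) (m * b2 + N * b3) (m * c2 + N * c3) @ g)"
    using word_equiv_cong[OF transl_add[of "m * a2" "m * b2" "m * c2" "N * a3" "N * b3" "N * c3"],
        of "transl (n * a1) (n * b1) (n * c1)" g]
    by simp
  also have "word_equiv \<dots> (transl (n * a1 + m * a2 + N * a3) (n * b1 + m * b2 + N * b3)
      (n * c1 + m * c2 + N * c3) @ g)"
    using word_equiv_append_right[OF transl_add, of _ _ _ _ _ _ g] by (simp add: add.assoc)
  finally show ?thesis .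
qed

lemma transl_units:
  "transl 1 0 0 = T1_word" "transl 0 1 0 = T2_word" "transl 0 0 1 = T4_word"
  "transl (-1) (-1) 0 = T1_inv_word @ T2_inv_word" "transl (-1) 1 0 = T1_inv_word @ T2_word"
  "transl 0 0 (-1) = T4_inv_word" "transl 0 0 2 = T4_word @ T4_word"
  by (simp_all add: transl_def word_power_def numeral_2_eq_2)

section \<open>Action on the tau functions\<close>

lemma tauf_word_aut: "tauf n m N = word_aut (transl n m N) (\<lambda>p. tau p 1)"
proof -
  have "T1 = word_aut T1_word" "T1inv = word_aut T1_inv_word" "T2 = word_aut T2_word"
    "T2inv = word_aut T2_inv_word" "T4 = word_aut T4_word" "T4inv = word_aut T4_inv_word"
    by (simp_all add: T1_def T1inv_def T2_def T2inv_def T4_def T4inv_def T1_word_def T1_inv_word_def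
        T2_word_def T2_inv_word_def T4_word_def T4_inv_word_def word_aut_Cons word_aut_Nil
        s_def pi_a_def w0_def r_def comp_assoc)
  then show ?thesis
    by (simp add: tauf_def transl_def word_aut_append word_aut_word_power)
qed

lemma tauf_transform:
  assumes "word_equiv (g @ transl 1 0 0) (transl a1 b1 c1 @ g)"
    and "word_equiv (g @ transl 0 1 0) (transl a2 b2 c2 @ g)"
    and "word_equiv (g @ transl 0 0 1) (transl a3 b3 c3 @ g)"
    and "eq_near_pos (word_aut g (\<lambda>p. tau p 1)) (word_aut (transl a0 b0 c0) (\<lambda>p. tau p 1))"
    and "n' = a0 + n * a1 + m * a2 + N * a3" "m' = b0 + n * b1 + m * b2 + N * b3"
      "N' = c0 + n * c1 + m * c2 + N * c3"
  shows "keq (word_aut g (tauf n m N)) (tauf n' m' N')"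
proof -
  define t :: kelt where "t = (\<lambda>p. tau p 1)"
  define v where
    "v = transl (n * a1 + m * a2 + N * a3) (n * b1 + m * b2 + N * b3) (n * c1 + m * c2 + N * c3)"
  have "word_aut g (tauf n m N) = word_aut (g @ transl n m N) t"
    by (simp add: tauf_word_aut word_aut_append t_def)
  also have "eq_near_pos \<dots> (word_aut (v @ g) t)"
    unfolding t_def v_def by (rule word_equiv_tau[OF transl_conj[OF assms(1-3)]])
  also have "word_aut (v @ g) t = word_aut v (word_aut g t)"
    by (simp add: word_aut_append)
  also have "eq_near_pos \<dots> (word_aut v (word_aut (transl a0 b0 c0) t))"
    unfolding t_def by (rule eq_near_pos_word_aut[OF assms(4)])
  also have "\<dots> = word_aut (v @ transl a0 b0 c0) t"
    by (simp add: word_aut_append)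
  also have "eq_near_pos \<dots> (tauf n' m' N')"
    unfolding tauf_word_aut t_def v_def assms(5-7)
    using word_equiv_tau[OF transl_add[of "n * a1 + m * a2 + N * a3" "n * b1 + m * b2 + N * b3"
        "n * c1 + m * c2 + N * c3" a0 b0 c0]]
    by (simp add: ac_simps)
  finally show ?thesis by (rule eq_near_pos_keq)
qed

lemma S0_action:
  "word_equiv ([S 0] @ transl 1 0 0) (transl (-1) (-1) 0 @ [S 0])"
  "word_equiv ([S 0] @ transl 0 1 0) (transl 0 1 0 @ [S 0])"
  "word_equiv ([S 0] @ transl 0 0 1) (transl 0 0 1 @ [S 0])"
  "eq_near_pos (word_aut [S 0] (\<lambda>p. tau p 1)) (word_aut (transl 0 0 0) (\<lambda>p. tau p 1))"
  using S0_T1_conj S0_T2_conj word_equiv_sym[OF reflections_commute[of T4_word "[S 0]"]]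
  by (simp_all add: transl_units T1_word_def T1_inv_word_def T2_word_def T2_inv_word_def
      T4_word_def word_aut_tau tau_sig_s)

lemma S1_action:
  "word_equiv ([S 1] @ transl 1 0 0) (transl 0 1 0 @ [S 1])"
  "word_equiv ([S 1] @ transl 0 1 0) (transl 1 0 0 @ [S 1])"
  "word_equiv ([S 1] @ transl 0 0 1) (transl 0 0 1 @ [S 1])"
  "eq_near_pos (word_aut [S 1] (\<lambda>p. tau p 1)) (word_aut (transl (-1) 1 0) (\<lambda>p. tau p 1))"
  using S1_T2_conj word_equiv_sym[OF reflections_commute[of T4_word "[S 1]"]]
  by (simp_all add: transl_units T1_word_def T1_inv_word_def T2_word_def T2_inv_word_def
      T4_word_def word_aut_tau tau_sig_s)

lemma S2_action:
  "word_equiv ([S 2] @ transl 1 0 0) (transl 1 0 0 @ [S 2])"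
  "word_equiv ([S 2] @ transl 0 1 0) (transl (-1) (-1) 0 @ [S 2])"
  "word_equiv ([S 2] @ transl 0 0 1) (transl 0 0 1 @ [S 2])"
  "eq_near_pos (word_aut [S 2] (\<lambda>p. tau p 1)) (word_aut (transl 0 0 0) (\<lambda>p. tau p 1))"
  using S2_T1_conj S2_T2_conj word_equiv_sym[OF reflections_commute[of T4_word "[S 2]"]]
  by (simp_all add: transl_units T1_word_def T1_inv_word_def T2_word_def T2_inv_word_def
      T4_word_def word_aut_tau tau_sig_s)

lemma Rot_action:
  "word_equiv ([Rot] @ transl 1 0 0) (transl 0 1 0 @ [Rot])"
  "word_equiv ([Rot] @ transl 0 1 0) (transl (-1) (-1) 0 @ [Rot])"
  "word_equiv ([Rot] @ transl 0 0 1) (transl 0 0 1 @ [Rot])"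
  "eq_near_pos (word_aut [Rot] (\<lambda>p. tau p 1)) (word_aut (transl 0 1 0) (\<lambda>p. tau p 1))"
  using Rot_T1_conj Rot_T2_conj word_equiv_sym[OF reflections_commute[of T4_word "[Rot]"]]
  by (simp_all add: transl_units T1_word_def T1_inv_word_def T2_word_def T2_inv_word_def
      T4_word_def word_aut_tau tau_sig_s)

lemma W0_action:
  "word_equiv ([W0] @ transl 1 0 0) (transl 1 0 0 @ [W0])"
  "word_equiv ([W0] @ transl 0 1 0) (transl 0 1 0 @ [W0])"
  "word_equiv ([W0] @ transl 0 0 1) (transl 0 0 (-1) @ [W0])"
  "eq_near_pos (word_aut [W0] (\<lambda>p. tau p 1)) (word_aut (transl 0 0 0) (\<lambda>p. tau p 1))"
  using reflections_commute[of "[W0]" T1_word] reflections_commute[of "[W0]" T2_word]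
  by (simp_all add: transl_units T1_word_def T2_word_def T4_word_def T4_inv_word_def word_aut_tau)

lemma R_action:
  "word_equiv ([R] @ transl 1 0 0) (transl 1 0 0 @ [R])"
  "word_equiv ([R] @ transl 0 1 0) (transl 0 1 0 @ [R])"
  "word_equiv ([R] @ transl 0 0 1) (transl 0 0 (-1) @ [R])"
  "eq_near_pos (word_aut [R] (\<lambda>p. tau p 1)) (word_aut (transl 0 0 1) (\<lambda>p. tau p 1))"
  using reflections_commute[of "[R]" T1_word] reflections_commute[of "[R]" T2_word] R_T4_conj
  by (simp_all add: transl_units T1_word_def T2_word_def T4_word_def T4_inv_word_def word_aut_tau)

lemma W1_action:
  "word_equiv ([W1] @ transl 1 0 0) (transl 1 0 0 @ [W1])"
  "word_equiv ([W1] @ transl 0 1 0) (transl 0 1 0 @ [W1])"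
  "word_equiv ([W1] @ transl 0 0 1) (transl 0 0 (-1) @ [W1])"
  "eq_near_pos (word_aut [W1] (\<lambda>p. tau p 1)) (word_aut (transl 0 0 2) (\<lambda>p. tau p 1))"
proof -
  show "word_equiv ([W1] @ transl 1 0 0) (transl 1 0 0 @ [W1])"
    "word_equiv ([W1] @ transl 0 1 0) (transl 0 1 0 @ [W1])"
    using W1_commute[of T1_word] W1_commute[of T2_word]
    by (simp_all add: transl_units T1_word_def T2_word_def)
  have "word_equiv ([W1] @ [R, W0]) ([R, W0, R] @ [R, W0])"
    using word_equiv_W1 by (rule word_equiv_append_right)
  also have "word_equiv \<dots> ([R, W0] @ [] @ [W0])"
    using word_equiv_cong[OF word_equiv_R_R, of "[R, W0]" "[W0]"] by simp
  also have "word_equiv \<dots> ([R] @ [] @ [])"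
    using word_equiv_cong[OF word_equiv_W0_W0, of "[R]" "[]"] by simp
  finally have left: "word_equiv ([W1, R, W0]) [R]" by simp
  have "word_equiv ([W0, R] @ [W1]) ([W0, R] @ [R, W0, R])"
    using word_equiv_W1 by (rule word_equiv_append_left)
  also have "word_equiv \<dots> ([W0] @ [] @ [W0, R])"
    using word_equiv_cong[OF word_equiv_R_R, of "[W0]" "[W0, R]"] by simp
  also have "word_equiv \<dots> ([] @ [] @ [R])"
    using word_equiv_cong[OF word_equiv_W0_W0, of "[]" "[R]"] by simp
  finally have right: "word_equiv ([W0, R, W1]) [R]" by simp
  show "word_equiv ([W1] @ transl 0 0 1) (transl 0 0 (-1) @ [W1])"
    using word_equiv_trans[OF left word_equiv_sym[OF right]]
    by (simp add: transl_units T4_word_def T4_inv_word_def)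
  have "eq_near_pos (word_aut [W1] (\<lambda>p. tau p 1)) (word_aut [R, W0, R] (\<lambda>p. tau p 1))"
    using word_equiv_W1 by (rule word_equiv_tau)
  then show "eq_near_pos (word_aut [W1] (\<lambda>p. tau p 1)) (word_aut (transl 0 0 2) (\<lambda>p. tau p 1))"
    by (simp add: transl_units T4_word_def word_aut_tau)
qed

lemma s0_tauf: "keq (s 0 (tauf n m N)) (tauf (-n) (m - n) N)"
  by (rule tauf_transform[OF S0_action, unfolded word_aut_gens]) simp_all

lemma s1_tauf: "keq (s 1 (tauf n m N)) (tauf (m - 1) (n + 1) N)"
  by (rule tauf_transform[OF S1_action, unfolded word_aut_gens]) simp_all

lemma s2_tauf: "keq (s 2 (tauf n m N)) (tauf (n - m) (-m) N)"
  by (rule tauf_transform[OF S2_action, unfolded word_aut_gens]) simp_all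

lemma pi_tauf: "keq (pi_a (tauf n m N)) (tauf (-m) (n - m + 1) N)"
  by (rule tauf_transform[OF Rot_action, unfolded word_aut_gens]) simp_all

lemma w0_tauf: "keq (w0 (tauf n m N)) (tauf n m (-N))"
  by (rule tauf_transform[OF W0_action, unfolded word_aut_gens]) simp_all

lemma w1_tauf: "keq (w1 (tauf n m N)) (tauf n m (2 - N))"
  by (rule tauf_transform[OF W1_action, unfolded word_aut_gens]) simp_all

lemma r_tauf: "keq (r (tauf n m N)) (tauf n m (1 - N))"
  by (rule tauf_transform[OF R_action, unfolded word_aut_gens]) simp_all

theorem proposition3p3:
  fixes n m N :: int
  shows "keq (s 0 (tauf n m N)) (tauf (-n) (m - n) N)
       \<and> keq (s 1 (tauf n m N)) (tauf (m - 1) (n + 1) N)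
       \<and> keq (s 2 (tauf n m N)) (tauf (n - m) (-m) N)
       \<and> keq (pi_a (tauf n m N)) (tauf (-m) (n - m + 1) N)
       \<and> keq (w0 (tauf n m N)) (tauf n m (-N))
       \<and> keq (w1 (tauf n m N)) (tauf n m (2 - N))
       \<and> keq (r (tauf n m N)) (tauf n m (1 - N))"
  by (intro conjI s0_tauf s1_tauf s2_tauf pi_tauf w0_tauf w1_tauf r_tauf)

end
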